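(* Let $\alpha>0$ and $f\in BV_\alpha(\mathbb{R}^d)$. For every compact set $\mathcal{K}\subset\mathbb{R}^d$, $$\|f\|_{L^\infty(\psi,\mathcal{K})}\le\frac{\max\big(\|\psi'\|_{L^\infty(\mathbb{R}^d)},1\big)}{d_{\mathcal{K}}}\,\|f\|_{BV_\alpha},$$ where $d_{\mathcal{K}}:=\operatorname{ess\,inf}_{x\in\mathcal{K}}\psi(B_1(x))>0$.
   Context: Let $\rho_\alpha(x)=(1+|x|^2)^{\alpha/2}$ and $\|f\|_{L^1_\alpha}:=\int\rho_\alpha|f|\,dx$. Let $\psi$ be a Radon probability measure on $\mathbb{R}^d$ absolutely continuous with respect to Lebesgue measure, with continuous bounded density $\psi'>0$ everywhere. For Borel $S$, $\operatorname{osc}(f,S):=\operatorname{ess\,sup}_S f-\operatorname{ess\,inf}_S f$. $\|f\|_{BV_\alpha}:=\|f\|_{L^1_\alpha}+\sup_{\epsilon\in(0,1]}\epsilon^{-1}\int\operatorname{osc}(f,B_\epsilon(x))\,d\psi(x)$, and $BV_\alpha$ is the space of functions with finite such norm. $\|f\|_{L^\infty(\psi,\mathcal{K})}$ is the essential supremum of $|f|$ on $\mathcal{K}$ with respect to $\psi$; $B_1(x)$ is the closed/open unit ball centered at $x$. *)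

theory Defs
  imports "HOL-Probability.Probability"
begin

definition rho :: "real \<Rightarrow> 'a::euclidean_space \<Rightarrow> real" where
  "rho \<alpha> x = (1 + (norm x)\<^sup>2) powr (\<alpha> / 2)"

definition essinf :: "'a measure \<Rightarrow> ('a \<Rightarrow> ereal) \<Rightarrow> ereal" where
  "essinf M f = - esssup M (\<lambda>x. - f x)"

definition osc :: "('a::euclidean_space \<Rightarrow> real) \<Rightarrow> 'a set \<Rightarrow> ereal" where
  "osc f S = esssup (restrict_space lborel S) (\<lambda>x. ereal (f x))
             - essinf (restrict_space lborel S) (\<lambda>x. ereal (f x))"

definition L1_alpha_norm :: "real \<Rightarrow> ('a::euclidean_space \<Rightarrow> real) \<Rightarrow> ennreal" where
  "L1_alpha_norm \<alpha> f = (\<integral>\<^sup>+ x. ennreal (rho \<alpha> x * \<bar>f x\<bar>) \<partial>lborel)"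

definition BV_alpha_norm ::
  "real \<Rightarrow> 'a::euclidean_space measure \<Rightarrow> ('a \<Rightarrow> real) \<Rightarrow> ennreal" where
  "BV_alpha_norm \<alpha> \<psi> f = L1_alpha_norm \<alpha> f
     + (SUP \<epsilon>\<in>{0<..1::real}. ennreal (1 / \<epsilon>) *
          (\<integral>\<^sup>+ x. e2ennreal (osc f (ball x \<epsilon>)) \<partial>\<psi>))"

end

theory Submission
  imports Defs
begin

text \<open>
  Discard the Lebesgue null set of points \<open>x\<close> at which \<open>f x\<close> lies outside the essential bounds of
  \<open>f\<close> on some ball containing \<open>x\<close> (a countable base reduces all balls to countably many).
  For the remaining points, \<open>x \<in> B\<^sub>1(y)\<close> gives \<open>|f x| \<le> |f y| + osc(f, B\<^sub>1(y))\<close>.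
  Integrating in \<open>y\<close> over \<open>B\<^sub>1(x)\<close> against \<open>\<psi>\<close> yields
  \<open>|f x| \<psi>(B\<^sub>1(x)) \<le> \<parallel>\<psi>'\<parallel>\<^sub>\<infinity> \<parallel>f\<parallel>\<^sub>L\<^sub>1 + \<integral> osc(f, B\<^sub>1(y)) d\<psi>(y) \<le> max(\<parallel>\<psi>'\<parallel>\<^sub>\<infinity>, 1) \<parallel>f\<parallel>\<^sub>B\<^sub>V\<close>,
  and \<open>\<psi>(B\<^sub>1(x)) \<ge> d\<^sub>K\<close> for almost every \<open>x \<in> K\<close>. Finally \<open>d\<^sub>K > 0\<close> because the density
  has a positive minimum on the compact set \<open>K + B\<^sub>1(0)\<close>.
\<close>

lemma essinf_AE: "AE x in M. essinf M f \<le> f x"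
  using esssup_AE[of "\<lambda>x. - f x" M]
  by (rule eventually_mono) (simp add: essinf_def ereal_uminus_le_reorder)

lemma essinf_I:
  assumes "f \<in> borel_measurable M" and "AE x in M. c \<le> f x"
  shows "c \<le> essinf M f"
proof -
  have "esssup M (\<lambda>x. - f x) \<le> - c"
    using assms by (intro esssup_I) auto
  then show ?thesis
    unfolding essinf_def by (metis ereal_minus_le_minus ereal_uminus_uminus)
qed

lemma esssup_restrict_space_mono:
  assumes "u \<in> borel_measurable M" and "A \<in> sets M" and "B \<in> sets M" and "A \<subseteq> B"
  shows "esssup (restrict_space M A) u \<le> esssup (restrict_space M B) u"
proof (rule esssup_I)
  show "u \<in> borel_measurable (restrict_space M A)"
    using assms(1) by (rule measurable_restrict_space1)
  have "AE x in restrict_space M B. u x \<le> esssup (restrict_space M B) u"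
    by (rule esssup_AE)
  then have "AE x in M. x \<in> A \<longrightarrow> u x \<le> esssup (restrict_space M B) u"
    using assms(3,4) by (subst (asm) AE_restrict_space_iff) (auto elim: eventually_mono)
  then show "AE x in restrict_space M A. u x \<le> esssup (restrict_space M B) u"
    using assms(2) by (subst AE_restrict_space_iff) auto
qed

lemma AE_le_esssup_ball:
  fixes M :: "'a::{metric_space,second_countable_topology} measure"
  assumes "sets M = sets borel" and u: "u \<in> borel_measurable M"
  shows "AE x in M. \<forall>y r. x \<in> ball y r \<longrightarrow> u x \<le> esssup (restrict_space M (ball y r)) u"
proof -
  obtain \<B> :: "'a set set" where "countable \<B>" and \<B>: "topological_basis \<B>"
    using ex_countable_basis by blast
  have \<B>_sets: "b \<in> sets M" if "b \<in> \<B>" for b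
    using that topological_basis_open[OF \<B>] assms(1) by auto
  have "AE x in M. x \<in> b \<longrightarrow> u x \<le> esssup (restrict_space M b) u" if "b \<in> \<B>" for b
    using esssup_AE[of u "restrict_space M b"] \<B>_sets[OF that]
    by (subst (asm) AE_restrict_space_iff) auto
  then have "AE x in M. \<forall>b\<in>\<B>. x \<in> b \<longrightarrow> u x \<le> esssup (restrict_space M b) u"
    using \<open>countable \<B>\<close> by (subst AE_ball_countable) auto
  then show ?thesis
  proof (rule eventually_mono, intro allI impI)
    fix x y r
    assume x: "\<forall>b\<in>\<B>. x \<in> b \<longrightarrow> u x \<le> esssup (restrict_space M b) u" and "x \<in> ball y r"
    then obtain b where b: "b \<in> \<B>" "x \<in> b" "b \<subseteq> ball y r"
      using topological_basisE[OF \<B> open_ball] by blast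
    have "u x \<le> esssup (restrict_space M b) u"
      using x b by blast
    also have "\<dots> \<le> esssup (restrict_space M (ball y r)) u"
      using esssup_restrict_space_mono[OF u \<B>_sets[OF b(1)] _ b(3)] assms(1) by simp
    finally show "u x \<le> esssup (restrict_space M (ball y r)) u" .
  qed
qed

lemma max_esssup_one_eq_ereal:
  fixes g :: "'a \<Rightarrow> real"
  assumes "g \<in> borel_measurable M" and "bounded (range g)"
  obtains m where "max (esssup M (\<lambda>x. ereal (g x))) 1 = ereal m" and "1 \<le> m"
    and "AE x in M. g x \<le> m"
proof -
  obtain B where "\<And>x. g x \<le> B"
    using assms(2) bounded_iff abs_le_D1 by (metis rangeI real_norm_def)
  then have "esssup M (\<lambda>x. ereal (g x)) \<le> ereal B"
    using assms(1) by (intro esssup_I AE_I2) auto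
  then have "max (esssup M (\<lambda>x. ereal (g x))) 1 \<noteq> \<infinity>"
    and "max (esssup M (\<lambda>x. ereal (g x))) 1 \<noteq> - \<infinity>"
    by (auto simp: max_def)
  then obtain m where m: "max (esssup M (\<lambda>x. ereal (g x))) 1 = ereal m"
    by (cases "max (esssup M (\<lambda>x. ereal (g x))) 1") auto
  moreover have "1 \<le> m"
    using m by (metis ereal_less_eq(3) max.cobounded2 one_ereal_def)
  moreover have "AE x in M. g x \<le> m"
    using esssup_AE[of "\<lambda>x. ereal (g x)" M]
    by (rule eventually_mono) (metis m ereal_less_eq(3) max.coboundedI1)
  ultimately show ?thesis ..
qed

lemma measurable_emeasure_ball:
  fixes M :: "'a::{metric_space,second_countable_topology} measure" and r :: real
  assumes "sigma_finite_measure M" and "sets M = sets borel"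
  shows "(\<lambda>x. emeasure M (ball x r)) \<in> borel_measurable borel"
proof -
  have "open {p :: 'a \<times> 'a. dist (fst p) (snd p) < r}"
    by (intro open_Collect_less continuous_intros)
  then have "{p :: 'a \<times> 'a. dist (fst p) (snd p) < r} \<in> sets (borel \<Otimes>\<^sub>M M)"
    unfolding sets_pair_measure_cong[OF refl assms(2)] borel_prod by simp
  from sigma_finite_measure.measurable_emeasure_Pair[OF assms(1) this] show ?thesis
    by (simp add: vimage_def ball_def)
qed

lemma nn_integral_le_add_nn_integral:
  assumes a: "a \<in> borel_measurable M" and c: "c \<in> borel_measurable M"
    and "AE x in M. c x \<le> a x + b x" and "AE x in M. a x < \<top>"
  shows "(\<integral>\<^sup>+x. c x \<partial>M) \<le> (\<integral>\<^sup>+x. a x \<partial>M) + (\<integral>\<^sup>+x. b x \<partial>M)"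
proof -
  \<comment> \<open>\<open>b\<close> need not be measurable, so integrate the measurable \<open>c - a\<close> instead.\<close>
  have "(\<integral>\<^sup>+x. c x \<partial>M) \<le> (\<integral>\<^sup>+x. a x + (c x - a x) \<partial>M)"
    by (intro nn_integral_mono) (metis add_diff_inverse_ennreal add_increasing2 linear zero_le)
  also have "\<dots> = (\<integral>\<^sup>+x. a x \<partial>M) + (\<integral>\<^sup>+x. c x - a x \<partial>M)"
    using a c by (intro nn_integral_add) auto
  also have "(\<integral>\<^sup>+x. c x - a x \<partial>M) \<le> (\<integral>\<^sup>+x. b x \<partial>M)"
    using assms(3,4) by (intro nn_integral_mono_AE) (auto elim!: eventually_rev_mp simp: ennreal_minus_le_iff)
  finally show ?thesis by (simp add: add_left_mono)
qed

lemma nn_integral_density_le_cmult: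
  assumes "g \<in> borel_measurable M" and "AE x in M. g x \<le> m" and "a \<in> borel_measurable M"
  shows "(\<integral>\<^sup>+x. a x \<partial>density M g) \<le> m * (\<integral>\<^sup>+x. a x \<partial>M)"
proof -
  have "(\<integral>\<^sup>+x. a x \<partial>density M g) = (\<integral>\<^sup>+x. g x * a x \<partial>M)"
    using assms by (intro nn_integral_density)
  also have "\<dots> \<le> (\<integral>\<^sup>+x. m * a x \<partial>M)"
    using assms(2) by (intro nn_integral_mono_AE) (auto elim!: eventually_mono intro: mult_right_mono)
  also have "\<dots> = m * (\<integral>\<^sup>+x. a x \<partial>M)"
    using assms(3) by (rule nn_integral_cmult)
  finally show ?thesis .
qed

lemma emeasure_density_ball_uniformly_pos:
  fixes g :: "'a::euclidean_space \<Rightarrow> real"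
  assumes "continuous_on UNIV g" and "\<And>x. 0 < g x" and "compact K" and "0 < r"
  obtains c where "0 < c" and "\<And>x. x \<in> K \<Longrightarrow> ennreal c \<le> emeasure (density lborel g) (ball x r)"
proof -
  obtain R where R: "\<And>x. x \<in> K \<Longrightarrow> norm x \<le> R"
    using compact_imp_bounded[OF assms(3)] bounded_iff by blast
  obtain z where z_min: "\<And>y. y \<in> cball 0 (R + r) \<Longrightarrow> g z \<le> g y"
    using continuous_attains_inf[OF compact_cball _ continuous_on_subset[OF assms(1) subset_UNIV],
        of 0 "R + r"]
    by (metis empty_iff)
  define v where "v = unit_ball_vol (real DIM('a)) * r ^ DIM('a)"
  show ?thesis
  proof
    show "0 < g z * v"
      unfolding v_def using assms(2,4) by simp
  next
    fix x assume "x \<in> K"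
    have g_meas: "(\<lambda>x. ennreal (g x)) \<in> borel_measurable lborel"
      using borel_measurable_continuous_onI[OF continuous_on_ennreal[OF assms(1)]] by simp
    have "ennreal (g z * v) = (\<integral>\<^sup>+y. ennreal (g z) * indicator (ball x r) y \<partial>lborel)"
      using assms(2,4) by (simp add: nn_integral_cmult_indicator emeasure_ball v_def ennreal_mult' less_imp_le)
    also have "\<dots> \<le> (\<integral>\<^sup>+y. ennreal (g y) * indicator (ball x r) y \<partial>lborel)"
    proof (intro nn_integral_mono)
      fix y
      show "ennreal (g z) * indicator (ball x r) y \<le> ennreal (g y) * indicator (ball x r) y"
      proof (cases "y \<in> ball x r")
        case True
        then have "norm y \<le> R + r"
          using R[OF \<open>x \<in> K\<close>] norm_triangle_ineq2[of y x] by (auto simp: dist_norm norm_minus_commute)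
        then show ?thesis
          using True z_min by (simp add: ennreal_leI)
      qed simp
    qed
    also have "\<dots> = emeasure (density lborel g) (ball x r)"
      using g_meas by (simp add: emeasure_density)
    finally show "ennreal (g z * v) \<le> emeasure (density lborel g) (ball x r)" .
  qed
qed

lemma essinf_measure_density_ball_pos:
  fixes g :: "'a::euclidean_space \<Rightarrow> real"
  defines "\<psi> \<equiv> density lborel (\<lambda>x. ennreal (g x))"
  assumes "finite_measure \<psi>" and "continuous_on UNIV g" and "\<And>x. 0 < g x" and "compact K" and "0 < r"
  shows "0 < essinf (restrict_space \<psi> K) (\<lambda>x. ereal (measure \<psi> (ball x r)))"
proof -
  interpret \<psi>: finite_measure \<psi>
    by fact
  have sets_\<psi>: "sets \<psi> = sets borel"
    by (simp add: \<psi>_def)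
  obtain c where "0 < c" and c: "\<And>x. x \<in> K \<Longrightarrow> ennreal c \<le> emeasure \<psi> (ball x r)"
    using emeasure_density_ball_uniformly_pos[OF assms(3-6)] unfolding \<psi>_def by auto
  have "(\<lambda>x. ereal (measure \<psi> (ball x r))) \<in> borel_measurable (restrict_space \<psi> K)"
    using measurable_emeasure_ball[OF \<psi>.sigma_finite_measure_axioms sets_\<psi>, of r]
    by (intro measurable_restrict_space1) (simp add: measure_def measurable_cong_sets[OF sets_\<psi> refl])
  then have "ereal c \<le> essinf (restrict_space \<psi> K) (\<lambda>x. ereal (measure \<psi> (ball x r)))"
    using c \<psi>.emeasure_eq_measure
    by (intro essinf_I AE_I2) (auto simp: space_restrict_space \<psi>_def)
  with \<open>0 < c\<close> show ?thesis
    by (meson ereal_less(2) less_le_trans)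
qed

lemma ennreal_abs_le_abs_add_ereal_diff:
  fixes a b :: real and lo hi :: ereal
  assumes "lo \<le> ereal a" "ereal a \<le> hi" "lo \<le> ereal b" "ereal b \<le> hi"
  shows "ennreal \<bar>a\<bar> \<le> ennreal \<bar>b\<bar> + e2ennreal (hi - lo)"
proof (cases "hi - lo = \<infinity>")
  case False
  then obtain h l where "hi = ereal h" "lo = ereal l"
    using assms by (cases hi; cases lo) auto
  moreover from this have "\<bar>a\<bar> \<le> \<bar>b\<bar> + (h - l)" "0 \<le> h - l"
    using assms by auto
  ultimately show ?thesis
    by (simp add: e2ennreal_ereal ennreal_plus[symmetric] del: ennreal_plus)
qed simp

lemma ereal_le_divide_mult:
  fixes a h m b :: real and d :: ereal
  assumes "0 < d" and "d \<le> ereal h" and "a * h \<le> m * b" and "0 \<le> m" and "0 \<le> b"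
  shows "ereal a \<le> ereal m / d * ereal b"
proof -
  obtain \<delta> where \<delta>: "d = ereal \<delta>" "0 < \<delta>" "\<delta> \<le> h"
    using assms(1,2) by (cases d) auto
  have "0 \<le> m * b / \<delta>"
    using \<delta> assms(4,5) by simp
  have "a \<le> m * b / \<delta>"
  proof (cases "a \<le> 0")
    case False
    then have "a * \<delta> \<le> m * b"
      using \<delta> assms(3) by (meson less_eq_real_def mult_left_mono not_le order_trans)
    then show ?thesis
      using \<delta> by (simp add: field_simps)
  qed (use \<open>0 \<le> m * b / \<delta>\<close> in linarith)
  then show ?thesis
    using \<delta> by (simp add: divide_ereal_def field_simps)
qed

definition within_ess_bounds_on_balls :: "('a::euclidean_space \<Rightarrow> real) \<Rightarrow> 'a \<Rightarrow> bool" where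
  "within_ess_bounds_on_balls f x \<longleftrightarrow> (\<forall>y r. x \<in> ball y r \<longrightarrow>
     essinf (restrict_space lborel (ball y r)) (\<lambda>z. ereal (f z)) \<le> ereal (f x) \<and>
     ereal (f x) \<le> esssup (restrict_space lborel (ball y r)) (\<lambda>z. ereal (f z)))"

lemma AE_within_ess_bounds_on_balls:
  assumes "f \<in> borel_measurable lborel"
  shows "AE x in lborel. within_ess_bounds_on_balls f x"
proof -
  have "AE x in lborel. \<forall>y r. x \<in> ball y r \<longrightarrow>
      ereal (f x) \<le> esssup (restrict_space lborel (ball y r)) (\<lambda>z. ereal (f z))"
    by (rule AE_le_esssup_ball) (use assms in simp_all)
  moreover have "AE x in lborel. \<forall>y r. x \<in> ball y r \<longrightarrow>
      - ereal (f x) \<le> esssup (restrict_space lborel (ball y r)) (\<lambda>z. - ereal (f z))"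
    by (rule AE_le_esssup_ball) (use assms in simp_all)
  ultimately show ?thesis
    unfolding within_ess_bounds_on_balls_def
    by eventually_elim (auto simp: essinf_def ereal_uminus_le_reorder)
qed

lemma abs_le_abs_add_osc_ball:
  assumes "within_ess_bounds_on_balls f x" and "within_ess_bounds_on_balls f y" and "x \<in> ball y r"
  shows "ennreal \<bar>f x\<bar> \<le> ennreal \<bar>f y\<bar> + e2ennreal (osc f (ball y r))"
proof -
  have "y \<in> ball y r"
    using assms(3) by (metis centre_in_ball le_less_trans mem_ball zero_le_dist)
  then show ?thesis
    using assms unfolding within_ess_bounds_on_balls_def osc_def
    by (intro ennreal_abs_le_abs_add_ereal_diff) blast+
qed

lemma nn_integral_le_L1_alpha_norm:
  assumes "0 \<le> \<alpha>"
  shows "(\<integral>\<^sup>+x. ennreal \<bar>f x\<bar> \<partial>lborel) \<le> L1_alpha_norm \<alpha> f"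
  unfolding L1_alpha_norm_def
proof (intro nn_integral_mono ennreal_leI)
  fix x :: 'a
  have "1 \<le> rho \<alpha> x"
    unfolding rho_def using assms by (intro ge_one_powr_ge_zero) auto
  then show "\<bar>f x\<bar> \<le> rho \<alpha> x * \<bar>f x\<bar>"
    by (simp add: mult_le_cancel_right1)
qed

lemma AE_abs_mult_emeasure_ball_le_BV_alpha_norm:
  fixes f g :: "'a::euclidean_space \<Rightarrow> real"
  defines "\<psi> \<equiv> density lborel (\<lambda>x. ennreal (g x))"
  assumes g: "g \<in> borel_measurable lborel" and g_le: "AE y in lborel. g y \<le> m" and "1 \<le> m"
    and "0 \<le> \<alpha>" and f: "f \<in> borel_measurable lborel"
  shows "AE x in \<psi>. ennreal \<bar>f x\<bar> * emeasure \<psi> (ball x 1) \<le> ennreal m * BV_alpha_norm \<alpha> \<psi> f"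
proof -
  let ?osc = "SUP \<epsilon>\<in>{0<..1::real}. ennreal (1 / \<epsilon>) * (\<integral>\<^sup>+y. e2ennreal (osc f (ball y \<epsilon>)) \<partial>\<psi>)"
  have sets_\<psi>: "sets \<psi> = sets lborel"
    by (simp add: \<psi>_def)
  have AE_within: "AE y in \<psi>. within_ess_bounds_on_balls f y"
    unfolding \<psi>_def using g AE_within_ess_bounds_on_balls[OF f]
    by (subst AE_density) (auto elim: eventually_mono)
  show ?thesis
  proof (rule eventually_mono[OF AE_within])
    fix x assume x: "within_ess_bounds_on_balls f x"
    from AE_within have "AE y in \<psi>. ennreal \<bar>f x\<bar> * indicator (ball x 1) y
        \<le> ennreal \<bar>f y\<bar> + e2ennreal (osc f (ball y 1))"
      by eventually_elim (auto simp: indicator_def dist_commute intro: abs_le_abs_add_osc_ball[OF x])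
    moreover have "(\<lambda>y. ennreal \<bar>f x\<bar> * indicator (ball x 1) y) \<in> borel_measurable \<psi>"
      using sets_\<psi> by (intro borel_measurable_times_ennreal borel_measurable_indicator) auto
    ultimately have "ennreal \<bar>f x\<bar> * emeasure \<psi> (ball x 1)
        \<le> (\<integral>\<^sup>+y. ennreal \<bar>f y\<bar> \<partial>\<psi>) + (\<integral>\<^sup>+y. e2ennreal (osc f (ball y 1)) \<partial>\<psi>)"
      using f sets_\<psi>
      by (subst nn_integral_cmult_indicator[symmetric])
         (auto intro!: nn_integral_le_add_nn_integral simp: measurable_cong_sets[OF sets_\<psi> refl])
    also have "(\<integral>\<^sup>+y. ennreal \<bar>f y\<bar> \<partial>\<psi>) \<le> ennreal m * (\<integral>\<^sup>+y. ennreal \<bar>f y\<bar> \<partial>lborel)"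
      unfolding \<psi>_def using g g_le f
      by (intro nn_integral_density_le_cmult) (auto elim!: eventually_mono intro: ennreal_leI)
    also have "\<dots> \<le> ennreal m * L1_alpha_norm \<alpha> f"
      using \<open>0 \<le> \<alpha>\<close> by (intro mult_left_mono nn_integral_le_L1_alpha_norm) auto
    also have "(\<integral>\<^sup>+y. e2ennreal (osc f (ball y 1)) \<partial>\<psi>) \<le> ?osc"
      by (rule SUP_upper2[of 1]) auto
    also have "?osc \<le> ennreal m * ?osc"
      using mult_right_mono[of 1 "ennreal m" ?osc] \<open>1 \<le> m\<close> by simp
    finally show "ennreal \<bar>f x\<bar> * emeasure \<psi> (ball x 1) \<le> ennreal m * BV_alpha_norm \<alpha> \<psi> f"
      unfolding BV_alpha_norm_def by (simp add: distrib_left)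
  qed
qed

theorem proposition17:
  fixes \<alpha> :: real and g :: "'a::euclidean_space \<Rightarrow> real"
    and f :: "'a \<Rightarrow> real" and K :: "'a set"
  defines "\<psi> \<equiv> density lborel (\<lambda>x. ennreal (g x))"
  assumes g_cont: "continuous_on UNIV g"
    and g_bdd: "bounded (range g)"
    and g_pos: "\<And>x. g x > 0"
    and g_prob: "(\<integral>\<^sup>+ x. ennreal (g x) \<partial>lborel) = 1"
    and \<alpha>_pos: "\<alpha> > 0"
    and f_meas: "f \<in> borel_measurable lborel"
    and f_BV: "BV_alpha_norm \<alpha> \<psi> f < \<top>"
    and K_compact: "compact K"
  shows "essinf (restrict_space \<psi> K) (\<lambda>x. ereal (measure \<psi> (ball x 1))) > 0
    \<and> esssup (restrict_space \<psi> K) (\<lambda>x. ereal \<bar>f x\<bar>)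
      \<le> max (esssup lborel (\<lambda>x. ereal (g x))) 1
          / essinf (restrict_space \<psi> K) (\<lambda>x. ereal (measure \<psi> (ball x 1)))
          * enn2ereal (BV_alpha_norm \<alpha> \<psi> f)"
proof -
  have g_meas: "g \<in> borel_measurable lborel"
    using borel_measurable_continuous_onI[OF g_cont] by simp
  interpret \<psi>: finite_measure \<psi>
    using g_meas g_prob by (intro finite_measureI) (simp add: \<psi>_def emeasure_density)
  define d where "d = essinf (restrict_space \<psi> K) (\<lambda>x. ereal (measure \<psi> (ball x 1)))"
  have "0 < d"
    using essinf_measure_density_ball_pos[OF _ g_cont g_pos K_compact zero_less_one]
      \<psi>.finite_measure_axioms
    unfolding d_def \<psi>_def by blast
  obtain m where m: "max (esssup lborel (\<lambda>x. ereal (g x))) 1 = ereal m" "1 \<le> m"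
    and g_le: "AE x in lborel. g x \<le> m"
    using max_esssup_one_eq_ereal[OF g_meas g_bdd] .
  obtain bv where "0 \<le> bv" and bv: "BV_alpha_norm \<alpha> \<psi> f = ennreal bv"
    using f_BV by (cases "BV_alpha_norm \<alpha> \<psi> f" rule: ennreal_cases) auto
  have "AE x in \<psi>. ennreal \<bar>f x\<bar> * emeasure \<psi> (ball x 1) \<le> ennreal m * BV_alpha_norm \<alpha> \<psi> f"
    unfolding \<psi>_def
    using AE_abs_mult_emeasure_ball_le_BV_alpha_norm[OF g_meas g_le m(2) less_imp_le[OF \<alpha>_pos] f_meas] .
  then have "AE x in restrict_space \<psi> K. ennreal \<bar>f x\<bar> * emeasure \<psi> (ball x 1) \<le> ennreal m * ennreal bv"
    unfolding bv using compact_imp_closed[OF K_compact]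
    by (subst AE_restrict_space_iff) (auto simp: \<psi>_def elim: eventually_mono)
  then have "AE x in restrict_space \<psi> K. ereal \<bar>f x\<bar> \<le> ereal m / d * ereal bv"
    using essinf_AE[of "restrict_space \<psi> K" "\<lambda>x. ereal (measure \<psi> (ball x 1))"]
  proof eventually_elim
    case (elim x)
    then have "\<bar>f x\<bar> * measure \<psi> (ball x 1) \<le> m * bv"
      using m(2) \<open>0 \<le> bv\<close> by (simp add: \<psi>.emeasure_eq_measure ennreal_mult[symmetric] ennreal_le_iff)
    then show ?case
      using \<open>0 < d\<close> elim(2) m(2) \<open>0 \<le> bv\<close> unfolding d_def by (intro ereal_le_divide_mult) auto
  qed
  then have "esssup (restrict_space \<psi> K) (\<lambda>x. ereal \<bar>f x\<bar>) \<le> ereal m / d * ereal bv"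
    using f_meas by (intro esssup_I measurable_restrict_space1) (simp add: \<psi>_def)
  then show ?thesis
    using \<open>0 < d\<close> \<open>0 \<le> bv\<close> by (simp add: d_def m bv enn2ereal_ennreal)
qed

end
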